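(* Let $\Gamma,\Delta$ be finite multisets of formulas, $p$ a propositional variable and $a$ an agent symbol. Then there exists a formula $A$ such that: (i) $\mathsf{V}(A)\subseteq\mathsf{V}(\Gamma\cup\Delta)\setminus\{p\}$ and $\mathsf{Agt}(A)\subseteq\mathsf{Agt}(\Gamma\cup\Delta)\setminus\{a\}$; (ii) $\mathsf{G}(\mathbf{KT}_D)\vdash\Gamma,A\Rightarrow\Delta$; (iii) for all finite multisets $\Pi,\Lambda$ of formulas with $p\notin\mathsf{V}(\Pi\cup\Lambda)$ and $a\notin\mathsf{Agt}(\Pi\cup\Lambda)$: if $\mathsf{G}(\mathbf{KT}_D)\vdash\Pi,\Gamma\Rightarrow\Delta,\Lambda$, then $\mathsf{G}(\mathbf{KT}_D)\vdash\Pi\Rightarrow A,\Lambda$.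
   Context: Language: fix a finite nonempty set $\mathsf{Agt}$ of agent symbols and a countable set $\mathsf{Prop}$ of propositional variables; $\mathsf{Grp}$ is the set of nonempty subsets of $\mathsf{Agt}$. Formulas: $\alpha::=p\mid\bot\mid\alpha\wedge\alpha\mid\alpha\vee\alpha\mid\alpha\rightarrow\alpha\mid\neg\alpha\mid D_G\alpha$ with $p\in\mathsf{Prop}$, $G\in\mathsf{Grp}$. $\mathsf{V}(\cdot)$ is the set of propositional variables occurring, $\mathsf{Agt}(\cdot)$ the set of agent symbols occurring (the union of all $G$ with $D_G$ occurring); for multisets these are unions. An outmost-boxed formula is one of the form $D_G\gamma$. Sequent calculus $\mathsf{G}(\mathbf{KT}_D)$: sequents $\Gamma\Rightarrow\Delta$ are pairs of finite multisets; $\vdash S$ means $S$ is the root of a finite tree built from initial sequents by the rules. Initial sequents $\Gamma,p\Rightarrow p,\Delta$ ($p\in\mathsf{Prop}$) and $\bot,\Gamma\Rightarrow\Delta$. Rules: $(R\wedge)$ from $\Gamma\Rightarrow\Delta,\alpha_1$ and $\Gamma\Rightarrow\Delta,\alpha_2$ infer $\Gamma\Rightarrow\Delta,\alpha_1\wedge\alpha_2$; $(L\wedge)$ from $\alpha_1,\alpha_2,\Gamma\Rightarrow\Delta$ infer $\alpha_1\wedge\alpha_2,\Gamma\Rightarrow\Delta$; $(R\vee)$ from $\Gamma\Rightarrow\Delta,\alpha_1,\alpha_2$ infer $\Gamma\Rightarrow\Delta,\alpha_1\vee\alpha_2$; $(L\vee)$ from $\alpha_1,\Gamma\Rightarrow\Delta$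 and $\alpha_2,\Gamma\Rightarrow\Delta$ infer $\alpha_1\vee\alpha_2,\Gamma\Rightarrow\Delta$; $(R\rightarrow)$ from $\alpha_1,\Gamma\Rightarrow\Delta,\alpha_2$ infer $\Gamma\Rightarrow\Delta,\alpha_1\rightarrow\alpha_2$; $(L\rightarrow)$ from $\Gamma\Rightarrow\Delta,\alpha_1$ and $\alpha_2,\Gamma\Rightarrow\Delta$ infer $\alpha_1\rightarrow\alpha_2,\Gamma\Rightarrow\Delta$; $(R\neg)$ from $\alpha,\Gamma\Rightarrow\Delta$ infer $\Gamma\Rightarrow\Delta,\neg\alpha$; $(L\neg)$ from $\Gamma\Rightarrow\Delta,\alpha$ infer $\neg\alpha,\Gamma\Rightarrow\Delta$; $(D_K)$: from $\alpha_1,\dots,\alpha_n\Rightarrow\beta$ ($n\ge0$) infer $\Sigma,D_{G_1}\alpha_1,\dots,D_{G_n}\alpha_n\Rightarrow D_G\beta,\Omega$, provided $G_i\subseteq G$ for all $i$, $\Sigma$ consists only of propositional variables, $\bot$, and formulas $D_H\gamma$ with $H\not\subseteq G$, and $\Omega$ consists only of propositional variables, $\bot$ and outmost-boxed formulas; $(D_T)$: from $D_G\alpha,\alpha,\Gamma\Rightarrow\Delta$ infer $D_G\alpha,\Gamma\Rightarrow\Delta$. *)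

theory Defs
  imports Main "HOL-Library.Multiset" "HOL-Library.Countable"
begin

text \<open>D G \<alpha> is the distributed-knowledge modality;
groups G are required to be nonempty via wff.\<close>

datatype ('a, 'p) fm =
    Var 'p
  | Bot
  | Conj "('a, 'p) fm" "('a, 'p) fm"
  | Disj "('a, 'p) fm" "('a, 'p) fm"
  | Imp "('a, 'p) fm" "('a, 'p) fm"
  | Neg "('a, 'p) fm"
  | D "'a set" "('a, 'p) fm"

fun wff :: "('a, 'p) fm \<Rightarrow> bool" where
  "wff (Var p) = True"
| "wff Bot = True"
| "wff (Conj a b) = (wff a \<and> wff b)"
| "wff (Disj a b) = (wff a \<and> wff b)"
| "wff (Imp a b) = (wff a \<and> wff b)"
| "wff (Neg a) = wff a"
| "wff (D G a) = (G \<noteq> {} \<and> wff a)"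

fun vars :: "('a, 'p) fm \<Rightarrow> 'p set" where
  "vars (Var p) = {p}"
| "vars Bot = {}"
| "vars (Conj a b) = vars a \<union> vars b"
| "vars (Disj a b) = vars a \<union> vars b"
| "vars (Imp a b) = vars a \<union> vars b"
| "vars (Neg a) = vars a"
| "vars (D G a) = vars a"

fun agts :: "('a, 'p) fm \<Rightarrow> 'a set" where
  "agts (Var p) = {}"
| "agts Bot = {}"
| "agts (Conj a b) = agts a \<union> agts b"
| "agts (Disj a b) = agts a \<union> agts b"
| "agts (Imp a b) = agts a \<union> agts b"
| "agts (Neg a) = agts a"
| "agts (D G a) = G \<union> agts a"

definition mvars :: "('a, 'p) fm multiset \<Rightarrow> 'p set" where
  "mvars M = (\<Union>A\<in>set_mset M. vars A)"

definition magts :: "('a, 'p) fm multiset \<Rightarrow> 'a set" where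
  "magts M = (\<Union>A\<in>set_mset M. agts A)"

definition is_boxed :: "('a, 'p) fm \<Rightarrow> bool" where
  "is_boxed A = (\<exists>G B. A = D G B)"

definition sigma_ok :: "'a set \<Rightarrow> ('a, 'p) fm \<Rightarrow> bool" where
  "sigma_ok G A = ((\<exists>p. A = Var p) \<or> A = Bot \<or> (\<exists>H B. A = D H B \<and> \<not> H \<subseteq> G))"

definition omega_ok :: "('a, 'p) fm \<Rightarrow> bool" where
  "omega_ok A = ((\<exists>p. A = Var p) \<or> A = Bot \<or> is_boxed A)"

inductive derivable :: "('a, 'p) fm multiset \<Rightarrow> ('a, 'p) fm multiset \<Rightarrow> bool" where
  Ax: "derivable (add_mset (Var p) \<Gamma>) (add_mset (Var p) \<Delta>)"
| BotL: "derivable (add_mset Bot \<Gamma>) \<Delta>"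
| ConjR: "derivable \<Gamma> (add_mset a1 \<Delta>) \<Longrightarrow> derivable \<Gamma> (add_mset a2 \<Delta>) \<Longrightarrow>
          derivable \<Gamma> (add_mset (Conj a1 a2) \<Delta>)"
| ConjL: "derivable (add_mset a1 (add_mset a2 \<Gamma>)) \<Delta> \<Longrightarrow>
          derivable (add_mset (Conj a1 a2) \<Gamma>) \<Delta>"
| DisjR: "derivable \<Gamma> (add_mset a1 (add_mset a2 \<Delta>)) \<Longrightarrow>
          derivable \<Gamma> (add_mset (Disj a1 a2) \<Delta>)"
| DisjL: "derivable (add_mset a1 \<Gamma>) \<Delta> \<Longrightarrow> derivable (add_mset a2 \<Gamma>) \<Delta> \<Longrightarrow>
          derivable (add_mset (Disj a1 a2) \<Gamma>) \<Delta>"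
| ImpR: "derivable (add_mset a1 \<Gamma>) (add_mset a2 \<Delta>) \<Longrightarrow>
          derivable \<Gamma> (add_mset (Imp a1 a2) \<Delta>)"
| ImpL: "derivable \<Gamma> (add_mset a1 \<Delta>) \<Longrightarrow> derivable (add_mset a2 \<Gamma>) \<Delta> \<Longrightarrow>
          derivable (add_mset (Imp a1 a2) \<Gamma>) \<Delta>"
| NegR: "derivable (add_mset a \<Gamma>) \<Delta> \<Longrightarrow> derivable \<Gamma> (add_mset (Neg a) \<Delta>)"
| NegL: "derivable \<Gamma> (add_mset a \<Delta>) \<Longrightarrow> derivable (add_mset (Neg a) \<Gamma>) \<Delta>"
| DK: "derivable (mset (map snd xs)) {#b#} \<Longrightarrow>
       (\<forall>(Gi, ai) \<in> set xs. Gi \<subseteq> G) \<Longrightarrow>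
       (\<forall>s \<in># \<Sigma>. sigma_ok G s) \<Longrightarrow>
       (\<forall>w \<in># \<Omega>. omega_ok w) \<Longrightarrow>
       derivable (\<Sigma> + mset (map (\<lambda>(Gi, ai). D Gi ai) xs)) (add_mset (D G b) \<Omega>)"
| DT: "derivable (add_mset (D G a) (add_mset a \<Gamma>)) \<Delta> \<Longrightarrow>
       derivable (add_mset (D G a) \<Gamma>) \<Delta>"

end

theory Submission
  imports Defs
begin

(*
  The proof is semantic. G(KT_D) is sound for Kripke models with one reflexive accessibility
  relation per group which shrinks as the group grows, and it is complete for them: backward
  proof search saturates an underivable sequent, and the saturated sequents form a canonical
  countermodel whose successors are supplied by the premise of rule D_K.

  Let L be the variables of Gamma, Delta other than p, C the nonempty groups of their agents
  other than a, and n their total modal depth. The interpolant A is the disjunction of those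
  characteristic formulas of depth n over L and C (they describe a world up to n-bisimilarity
  with respect to L and C) which together with Gamma derive Delta. If Pi => A, Lambda were
  underivable, the characteristic formula chi of a countermodel world w would not be among them,
  so Gamma, chi => Delta has a countermodel w'. Since w and w' are n-bisimilar, the two models
  can be glued into one in which Pi, Gamma hold and Delta, Lambda fail at a single world,
  contradicting the soundness of Pi, Gamma => Delta, Lambda.
*)


section \<open>Kripke semantics\<close>

record ('w, 'a, 'p) kmodel =
  worlds :: "'w set"
  acc :: "'a set \<Rightarrow> 'w \<Rightarrow> 'w \<Rightarrow> bool"
  val :: "'w \<Rightarrow> 'p \<Rightarrow> bool"

fun sat :: "('w, 'a, 'p) kmodel \<Rightarrow> 'w \<Rightarrow> ('a, 'p) fm \<Rightarrow> bool" where
  "sat M w (Var q) = val M w q"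
| "sat M w Bot = False"
| "sat M w (Conj f g) = (sat M w f \<and> sat M w g)"
| "sat M w (Disj f g) = (sat M w f \<or> sat M w g)"
| "sat M w (Imp f g) = (sat M w f \<longrightarrow> sat M w g)"
| "sat M w (Neg f) = (\<not> sat M w f)"
| "sat M w (D G f) = (\<forall>v\<in>worlds M. acc M G w v \<longrightarrow> sat M v f)"

definition dk_model :: "('w, 'a, 'p) kmodel \<Rightarrow> bool" where
  "dk_model M \<longleftrightarrow> (\<forall>G w. w \<in> worlds M \<longrightarrow> acc M G w w)
     \<and> (\<forall>G H w v. G \<subseteq> H \<longrightarrow> acc M H w v \<longrightarrow> acc M G w v)"

lemma dk_model_refl: "dk_model M \<Longrightarrow> w \<in> worlds M \<Longrightarrow> acc M G w w"
  unfolding dk_model_def by blast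

lemma dk_model_antimono: "dk_model M \<Longrightarrow> G \<subseteq> H \<Longrightarrow> acc M H w v \<Longrightarrow> acc M G w v"
  unfolding dk_model_def by blast

theorem soundness:
  assumes "derivable \<Gamma> \<Delta>" and "dk_model M" and "w \<in> worlds M" and "\<forall>f\<in>#\<Gamma>. sat M w f"
  shows "\<exists>f\<in>#\<Delta>. sat M w f"
  using assms
proof (induction arbitrary: w rule: derivable.induct)
  case (DK xs b G \<Sigma> \<Omega>)
  have "sat M v b" if v: "v \<in> worlds M" "acc M G w v" for v
  proof -
    have "sat M v c" if "(H, c) \<in> set xs" for H c
    proof -
      have "sat M w (D H c)" using DK.prems(3) that by force
      moreover have "acc M H w v"
        using DK.hyps(2) that dk_model_antimono[OF DK.prems(1) _ v(2)] by fastforce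
      ultimately show ?thesis using v(1) by simp
    qed
    then show ?thesis using DK.IH[OF DK.prems(1) v(1)] by force
  qed
  then show ?case by simp
next
  case (DT G a \<Gamma> \<Delta>)
  then have "sat M w a" using dk_model_refl by fastforce
  then show ?case using DT by simp
qed auto

section \<open>Completeness\<close>

(* pos and neg hold the formulas to be made true and false in the canonical model; the atoms
   and boxed formulas among them are also recorded in the underivable sequent lhs => rhs, to
   which rule D_K is applied backwards. *)
record ('a, 'p) hintikka =
  pos :: "('a, 'p) fm set"
  neg :: "('a, 'p) fm set"
  lhs :: "('a, 'p) fm multiset"
  rhs :: "('a, 'p) fm multiset"

fun pos_closed :: "('a, 'p) hintikka \<Rightarrow> ('a, 'p) fm \<Rightarrow> bool" where
  "pos_closed s (Var q) = (Var q \<in># lhs s)"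
| "pos_closed s Bot = False"
| "pos_closed s (Conj f g) = (f \<in> pos s \<and> g \<in> pos s)"
| "pos_closed s (Disj f g) = (f \<in> pos s \<or> g \<in> pos s)"
| "pos_closed s (Imp f g) = (f \<in> neg s \<or> g \<in> pos s)"
| "pos_closed s (Neg f) = (f \<in> neg s)"
| "pos_closed s (D G f) = (f \<in> pos s \<and> D G f \<in># lhs s)"

fun neg_closed :: "('a, 'p) hintikka \<Rightarrow> ('a, 'p) fm \<Rightarrow> bool" where
  "neg_closed s (Var q) = (Var q \<in># rhs s)"
| "neg_closed s Bot = True"
| "neg_closed s (Conj f g) = (f \<in> neg s \<or> g \<in> neg s)"
| "neg_closed s (Disj f g) = (f \<in> neg s \<and> g \<in> neg s)"
| "neg_closed s (Imp f g) = (f \<in> pos s \<and> g \<in> neg s)"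
| "neg_closed s (Neg f) = (f \<in> pos s)"
| "neg_closed s (D G f) = (D G f \<in># rhs s)"

definition saturated :: "('a, 'p) hintikka \<Rightarrow> bool" where
  "saturated s \<longleftrightarrow> \<not> derivable (lhs s) (rhs s)
     \<and> (\<forall>f\<in>#lhs s. omega_ok f) \<and> (\<forall>f\<in>#rhs s. omega_ok f)
     \<and> (\<forall>f\<in>pos s. pos_closed s f) \<and> (\<forall>f\<in>neg s. neg_closed s f)"

lemma saturated_pos_closed: "saturated s \<Longrightarrow> f \<in> pos s \<Longrightarrow> pos_closed s f"
  by (simp add: saturated_def)

lemma saturated_neg_closed: "saturated s \<Longrightarrow> f \<in> neg s \<Longrightarrow> neg_closed s f"
  by (simp add: saturated_def)

lemma pos_closed_mono:
  "pos_closed s f \<Longrightarrow> pos s \<subseteq> pos t \<Longrightarrow> neg s \<subseteq> neg t \<Longrightarrow> lhs s \<subseteq># lhs t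
   \<Longrightarrow> pos_closed t f"
  by (cases f) (auto dest: mset_subset_eqD)

lemma neg_closed_mono:
  "neg_closed s f \<Longrightarrow> pos s \<subseteq> pos t \<Longrightarrow> neg s \<subseteq> neg t \<Longrightarrow> rhs s \<subseteq># rhs t
   \<Longrightarrow> neg_closed t f"
  by (cases f) (auto dest: mset_subset_eqD)

lemma saturated_insert_pos:
  assumes "saturated s" and "pos_closed s f"
  shows "saturated (s\<lparr>pos := insert f (pos s)\<rparr>)"
proof -
  let ?t = "s\<lparr>pos := insert f (pos s)\<rparr>"
  have "pos_closed ?t g" if "pos_closed s g" for g by (rule pos_closed_mono[OF that]) auto
  moreover have "neg_closed ?t g" if "neg_closed s g" for g by (rule neg_closed_mono[OF that]) auto
  ultimately show ?thesis using assms unfolding saturated_def by auto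
qed

lemma saturated_insert_neg:
  assumes "saturated s" and "neg_closed s f"
  shows "saturated (s\<lparr>neg := insert f (neg s)\<rparr>)"
proof -
  let ?t = "s\<lparr>neg := insert f (neg s)\<rparr>"
  have "pos_closed ?t g" if "pos_closed s g" for g by (rule pos_closed_mono[OF that]) auto
  moreover have "neg_closed ?t g" if "neg_closed s g" for g by (rule neg_closed_mono[OF that]) auto
  ultimately show ?thesis using assms unfolding saturated_def by auto
qed

lemma omega_ok_simps [simp]:
  "omega_ok (Var q)" "omega_ok Bot" "omega_ok (D G f)" "\<not> omega_ok (Conj f g)"
  "\<not> omega_ok (Disj f g)" "\<not> omega_ok (Imp f g)" "\<not> omega_ok (Neg f)"
  by (auto simp: omega_ok_def is_boxed_def)

definition residue :: "('a, 'p) fm \<Rightarrow> ('a, 'p) fm multiset" where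
  "residue f = (if omega_ok f then {#f#} else {#})"

lemma omega_ok_residue: "g \<in># residue f \<Longrightarrow> omega_ok g"
  by (simp add: residue_def split: if_splits)

(* Applying the rule for f backwards: each pair lists the formulas added on the left and on the
   right of one premise. Irreducible formulas are not consumed but kept in the sequent, see
   residue. *)
fun left_steps :: "('a, 'p) fm \<Rightarrow> (('a, 'p) fm multiset \<times> ('a, 'p) fm multiset) list" where
  "left_steps (Var q) = [({#}, {#})]"
| "left_steps Bot = []"
| "left_steps (Conj f g) = [({#f, g#}, {#})]"
| "left_steps (Disj f g) = [({#f#}, {#}), ({#g#}, {#})]"
| "left_steps (Imp f g) = [({#}, {#f#}), ({#g#}, {#})]"
| "left_steps (Neg f) = [({#}, {#f#})]"
| "left_steps (D G f) = [({#f#}, {#})]"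

fun right_steps :: "('a, 'p) fm \<Rightarrow> (('a, 'p) fm multiset \<times> ('a, 'p) fm multiset) list" where
  "right_steps (Var q) = [({#}, {#})]"
| "right_steps Bot = [({#}, {#})]"
| "right_steps (Conj f g) = [({#}, {#f#}), ({#}, {#g#})]"
| "right_steps (Disj f g) = [({#}, {#f, g#})]"
| "right_steps (Imp f g) = [({#f#}, {#g#})]"
| "right_steps (Neg f) = [({#f#}, {#})]"
| "right_steps (D G f) = [({#}, {#})]"

lemma derivable_by_left_steps:
  assumes "\<forall>(A, B) \<in> set (left_steps f). derivable (A + residue f + \<Gamma>) (B + \<Delta>)"
  shows "derivable (add_mset f \<Gamma>) \<Delta>"
proof (cases f)
  case (D G g)
  then have "derivable (add_mset (D G g) (add_mset g \<Gamma>)) \<Delta>"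
    using assms by (simp add: residue_def add_mset_commute)
  then show ?thesis using D derivable.DT by blast
qed (use assms in \<open>auto simp: residue_def
      intro!: derivable.BotL derivable.ConjL derivable.DisjL derivable.ImpL derivable.NegL\<close>)

lemma derivable_by_right_steps:
  assumes "\<forall>(A, B) \<in> set (right_steps f). derivable (A + \<Gamma>) (B + residue f + \<Delta>)"
  shows "derivable \<Gamma> (add_mset f \<Delta>)"
  using assms by (cases f)
    (auto simp: residue_def intro!: derivable.ConjR derivable.DisjR derivable.ImpR derivable.NegR)

(* With size f + 1 instead, splitting Conj f g would not decrease the weight. *)
definition weight :: "('a, 'p) fm multiset \<Rightarrow> nat" where
  "weight M = (\<Sum>f\<in>#M. 2 * size f + 1)"

lemma weight_left_steps: "(A, B) \<in> set (left_steps f) \<Longrightarrow> weight (A + B) < 2 * size f + 1"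
  by (cases f) (auto simp: weight_def)

lemma weight_right_steps: "(A, B) \<in> set (right_steps f) \<Longrightarrow> weight (A + B) < 2 * size f + 1"
  by (cases f) (auto simp: weight_def)

lemma pos_closed_left_steps:
  "(A, B) \<in> set (left_steps f) \<Longrightarrow> set_mset A \<subseteq> pos s \<Longrightarrow> set_mset B \<subseteq> neg s
   \<Longrightarrow> residue f \<subseteq># lhs s \<Longrightarrow> pos_closed s f"
  by (cases f) (auto simp: residue_def)

lemma neg_closed_right_steps:
  "(A, B) \<in> set (right_steps f) \<Longrightarrow> set_mset A \<subseteq> pos s \<Longrightarrow> set_mset B \<subseteq> neg s
   \<Longrightarrow> residue f \<subseteq># rhs s \<Longrightarrow> neg_closed s f"
  by (cases f) (auto simp: residue_def)

definition has_saturation :: "('a, 'p) fm multiset \<Rightarrow> ('a, 'p) fm multiset \<Rightarrow>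
    ('a, 'p) fm multiset \<Rightarrow> ('a, 'p) fm multiset \<Rightarrow> bool" where
  "has_saturation \<Gamma> \<Delta> \<Gamma>\<^sub>0 \<Delta>\<^sub>0 \<longleftrightarrow> (\<exists>s. saturated s \<and> set_mset \<Gamma> \<subseteq> pos s \<and> set_mset \<Delta> \<subseteq> neg s
     \<and> \<Gamma>\<^sub>0 \<subseteq># lhs s \<and> \<Delta>\<^sub>0 \<subseteq># rhs s)"

lemma has_saturation_left_step:
  assumes "(A, B) \<in> set (left_steps f)"
    and "has_saturation (A + \<Gamma>) (B + \<Delta>) (residue f + \<Gamma>\<^sub>0) \<Delta>\<^sub>0"
  shows "has_saturation (add_mset f \<Gamma>) \<Delta> \<Gamma>\<^sub>0 \<Delta>\<^sub>0"
proof -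
  obtain s where s: "saturated s" "set_mset (A + \<Gamma>) \<subseteq> pos s" "set_mset (B + \<Delta>) \<subseteq> neg s"
    "residue f + \<Gamma>\<^sub>0 \<subseteq># lhs s" "\<Delta>\<^sub>0 \<subseteq># rhs s"
    using assms(2) unfolding has_saturation_def by blast
  have "residue f \<subseteq># lhs s" "\<Gamma>\<^sub>0 \<subseteq># lhs s"
    using s(4) mset_subset_eq_add_left mset_subset_eq_add_right subset_mset.order_trans by blast+
  moreover have "pos_closed s f"
    using pos_closed_left_steps[OF assms(1)] s(2,3) \<open>residue f \<subseteq># lhs s\<close> by simp
  ultimately show ?thesis
    using s unfolding has_saturation_def
    by (intro exI[of _ "s\<lparr>pos := insert f (pos s)\<rparr>"]) (auto simp: saturated_insert_pos)
qed

lemma has_saturation_right_step: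
  assumes "(A, B) \<in> set (right_steps f)"
    and "has_saturation (A + \<Gamma>) (B + \<Delta>) \<Gamma>\<^sub>0 (residue f + \<Delta>\<^sub>0)"
  shows "has_saturation \<Gamma> (add_mset f \<Delta>) \<Gamma>\<^sub>0 \<Delta>\<^sub>0"
proof -
  obtain s where s: "saturated s" "set_mset (A + \<Gamma>) \<subseteq> pos s" "set_mset (B + \<Delta>) \<subseteq> neg s"
    "\<Gamma>\<^sub>0 \<subseteq># lhs s" "residue f + \<Delta>\<^sub>0 \<subseteq># rhs s"
    using assms(2) unfolding has_saturation_def by blast
  have "residue f \<subseteq># rhs s" "\<Delta>\<^sub>0 \<subseteq># rhs s"
    using s(5) mset_subset_eq_add_left mset_subset_eq_add_right subset_mset.order_trans by blast+
  moreover have "neg_closed s f"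
    using neg_closed_right_steps[OF assms(1)] s(2,3) \<open>residue f \<subseteq># rhs s\<close> by simp
  ultimately show ?thesis
    using s unfolding has_saturation_def
    by (intro exI[of _ "s\<lparr>neg := insert f (neg s)\<rparr>"]) (auto simp: saturated_insert_neg)
qed

lemma not_derivable_has_saturation:
  assumes "\<not> derivable (\<Gamma> + \<Gamma>\<^sub>0) (\<Delta> + \<Delta>\<^sub>0)" and "\<forall>f\<in>#\<Gamma>\<^sub>0. omega_ok f" and "\<forall>f\<in>#\<Delta>\<^sub>0. omega_ok f"
  shows "has_saturation \<Gamma> \<Delta> \<Gamma>\<^sub>0 \<Delta>\<^sub>0"
  using assms
proof (induction "weight (\<Gamma> + \<Delta>)" arbitrary: \<Gamma> \<Delta> \<Gamma>\<^sub>0 \<Delta>\<^sub>0 rule: less_induct)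
  case less
  consider (left) f \<Gamma>' where "\<Gamma> = add_mset f \<Gamma>'"
    | (right) f \<Delta>' where "\<Gamma> = {#}" "\<Delta> = add_mset f \<Delta>'"
    | (empty) "\<Gamma> = {#}" "\<Delta> = {#}"
    by (metis multiset_cases)
  then show ?case
  proof cases
    case left
    have "\<not> derivable (add_mset f (\<Gamma>' + \<Gamma>\<^sub>0)) (\<Delta> + \<Delta>\<^sub>0)"
      using less.prems(1) left by simp
    then obtain A B where AB: "(A, B) \<in> set (left_steps f)"
      and "\<not> derivable (A + residue f + (\<Gamma>' + \<Gamma>\<^sub>0)) (B + (\<Delta> + \<Delta>\<^sub>0))"
      using derivable_by_left_steps by fastforce
    then have nd: "\<not> derivable ((A + \<Gamma>') + (residue f + \<Gamma>\<^sub>0)) ((B + \<Delta>) + \<Delta>\<^sub>0)"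
      by (simp add: ac_simps)
    have lt: "weight ((A + \<Gamma>') + (B + \<Delta>)) < weight (\<Gamma> + \<Delta>)"
      using weight_left_steps[OF AB] by (simp add: left weight_def)
    have ok: "\<forall>g\<in>#residue f + \<Gamma>\<^sub>0. omega_ok g"
      using less.prems(2) omega_ok_residue by auto
    from less.hyps[OF lt nd ok less.prems(3)] show ?thesis
      unfolding left by (rule has_saturation_left_step[OF AB])
  next
    case right
    have "\<not> derivable (\<Gamma> + \<Gamma>\<^sub>0) (add_mset f (\<Delta>' + \<Delta>\<^sub>0))"
      using less.prems(1) right by simp
    then obtain A B where AB: "(A, B) \<in> set (right_steps f)"
      and "\<not> derivable (A + (\<Gamma> + \<Gamma>\<^sub>0)) (B + residue f + (\<Delta>' + \<Delta>\<^sub>0))"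
      using derivable_by_right_steps by fastforce
    then have nd: "\<not> derivable ((A + \<Gamma>) + \<Gamma>\<^sub>0) ((B + \<Delta>') + (residue f + \<Delta>\<^sub>0))"
      by (simp add: ac_simps)
    have lt: "weight ((A + \<Gamma>) + (B + \<Delta>')) < weight (\<Gamma> + \<Delta>)"
      using weight_right_steps[OF AB] by (simp add: right weight_def)
    have ok: "\<forall>g\<in>#residue f + \<Delta>\<^sub>0. omega_ok g"
      using less.prems(3) omega_ok_residue by auto
    from less.hyps[OF lt nd less.prems(2) ok] show ?thesis
      unfolding right by (rule has_saturation_right_step[OF AB])
  next
    case empty
    then show ?thesis
      unfolding has_saturation_def saturated_def using less.prems
      by (intro exI[of _ "\<lparr>pos = {}, neg = {}, lhs = \<Gamma>\<^sub>0, rhs = \<Delta>\<^sub>0\<rparr>"]) simp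
  qed
qed

definition boxed_within :: "'a set \<Rightarrow> ('a, 'p) fm \<Rightarrow> bool" where
  "boxed_within G f \<longleftrightarrow> (\<exists>H c. f = D H c \<and> H \<subseteq> G)"

lemma mset_boxes_list:
  assumes "\<forall>f\<in>#M. boxed_within G f"
  shows "\<exists>xs. mset (map (\<lambda>(H, c). D H c) xs) = M \<and> (\<forall>(H, c)\<in>set xs. H \<subseteq> G)"
  using assms
proof (induction M)
  case empty
  then show ?case by simp
next
  case (add f M)
  then obtain xs where "mset (map (\<lambda>(H, c). D H c) xs) = M" "\<forall>(H, c)\<in>set xs. H \<subseteq> G"
    by auto
  moreover obtain H c where "f = D H c" "H \<subseteq> G"
    using add.prems by (auto simp: boxed_within_def)
  ultimately show ?case by (intro exI[of _ "(H, c) # xs"]) auto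
qed

lemma not_derivable_DK_premise:
  assumes "\<not> derivable \<Gamma> (add_mset (D G b) \<Omega>)" and "\<forall>f\<in>#\<Gamma>. omega_ok f" and "\<forall>f\<in>#\<Omega>. omega_ok f"
  shows "\<exists>\<Theta>. \<not> derivable \<Theta> {#b#} \<and> set_mset \<Theta> = {c. \<exists>H. H \<subseteq> G \<and> D H c \<in># \<Gamma>}"
proof -
  obtain xs where xs: "mset (map (\<lambda>(H, c). D H c) xs) = {#f \<in># \<Gamma>. boxed_within G f#}"
    "\<forall>(H, c)\<in>set xs. H \<subseteq> G"
    using mset_boxes_list[of "{#f \<in># \<Gamma>. boxed_within G f#}" G] by auto
  have \<Sigma>: "\<forall>f\<in>#{#f \<in># \<Gamma>. \<not> boxed_within G f#}. sigma_ok G f"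
    using assms(2) by (auto simp: sigma_ok_def omega_ok_def is_boxed_def boxed_within_def)
  have "{#f \<in># \<Gamma>. \<not> boxed_within G f#} + mset (map (\<lambda>(H, c). D H c) xs) = \<Gamma>"
    unfolding xs(1) by (rule trans[OF add.commute multiset_partition[symmetric]])
  then have "derivable (mset (map snd xs)) {#b#} \<Longrightarrow> derivable \<Gamma> (add_mset (D G b) \<Omega>)"
    using derivable.DK[OF _ xs(2) \<Sigma> assms(3)] by simp
  with assms(1) have "\<not> derivable (mset (map snd xs)) {#b#}" by blast
  moreover have "(H, c) \<in> set xs \<longleftrightarrow> H \<subseteq> G \<and> D H c \<in># \<Gamma>" for H c
  proof -
    have "(H, c) \<in> set xs \<longleftrightarrow> D H c \<in> set (map (\<lambda>(H, c). D H c) xs)"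
      by force
    also have "\<dots> \<longleftrightarrow> H \<subseteq> G \<and> D H c \<in># \<Gamma>"
      using arg_cong[OF xs(1), of set_mset] by (auto simp: boxed_within_def)
    finally show ?thesis .
  qed
  then have "set_mset (mset (map snd xs)) = {c. \<exists>H. H \<subseteq> G \<and> D H c \<in># \<Gamma>}"
    by (auto simp: Range_snd[symmetric] Range_iff)
  ultimately show ?thesis by blast
qed

definition canonical_acc :: "'a set \<Rightarrow> ('a, 'p) hintikka \<Rightarrow> ('a, 'p) hintikka \<Rightarrow> bool" where
  "canonical_acc G s t \<longleftrightarrow> t = s \<or> (\<exists>H b. G \<subseteq> H \<and> D H b \<in># rhs s \<and> b \<in> neg t
     \<and> (\<forall>K c. K \<subseteq> H \<longrightarrow> D K c \<in># lhs s \<longrightarrow> c \<in> pos t))"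

definition canonical :: "(('a, 'p) hintikka, 'a, 'p) kmodel" where
  "canonical = \<lparr>worlds = {s. saturated s}, acc = canonical_acc, val = (\<lambda>s q. Var q \<in># lhs s)\<rparr>"

lemma canonical_simps [simp]:
  "worlds canonical = {s. saturated s}" "acc canonical = canonical_acc"
  "val canonical s q \<longleftrightarrow> Var q \<in># lhs s"
  by (simp_all add: canonical_def)

lemma dk_model_canonical: "dk_model canonical"
  by (simp add: dk_model_def canonical_acc_def) (meson order_trans)

lemma canonical_successor:
  assumes "saturated s" and "D G b \<in># rhs s"
  shows "\<exists>t. saturated t \<and> canonical_acc G s t \<and> b \<in> neg t"
proof -
  have nd: "\<not> derivable (lhs s) (add_mset (D G b) (rhs s - {#D G b#}))"
    using assms by (simp add: saturated_def insert_DiffM)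
  have ok: "\<forall>f\<in>#lhs s. omega_ok f" "\<forall>f\<in>#rhs s - {#D G b#}. omega_ok f"
    using assms(1) unfolding saturated_def by (blast dest: in_diffD)+
  obtain \<Theta> where \<Theta>: "\<not> derivable \<Theta> {#b#}"
    "set_mset \<Theta> = {c. \<exists>H. H \<subseteq> G \<and> D H c \<in># lhs s}"
    using not_derivable_DK_premise[OF nd ok] by blast
  then have "has_saturation \<Theta> {#b#} {#} {#}"
    using not_derivable_has_saturation[of \<Theta> "{#}" "{#b#}" "{#}"] by simp
  then obtain t where t: "saturated t" "set_mset \<Theta> \<subseteq> pos t" "b \<in> neg t"
    unfolding has_saturation_def by auto
  have "canonical_acc G s t"
    unfolding canonical_acc_def using assms(2) t(2,3) \<Theta>(2)
    by (intro disjI2 exI[of _ G] exI[of _ b]) auto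
  with t show ?thesis by blast
qed

lemma canonical_truth:
  "saturated s \<Longrightarrow> (f \<in> pos s \<longrightarrow> sat canonical s f) \<and> (f \<in> neg s \<longrightarrow> \<not> sat canonical s f)"
proof (induction f arbitrary: s)
  case (Var q)
  have "\<not> (Var q \<in># lhs s \<and> Var q \<in># rhs s)"
    using Var derivable.Ax by (metis insert_DiffM saturated_def)
  then show ?case
    using Var by (auto simp: saturated_def)
next
  case (D G f)
  have "sat canonical s (D G f)" if "D G f \<in> pos s"
  proof -
    have "f \<in> pos s" "D G f \<in># lhs s"
      using D.prems that by (auto simp: saturated_def)
    then have "f \<in> pos t" if "canonical_acc G s t" for t
      using that unfolding canonical_acc_def by blast
    then show ?thesis using D.IH by auto
  qed
  moreover have "\<not> sat canonical s (D G f)" if "D G f \<in> neg s"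
  proof -
    have "D G f \<in># rhs s"
      using D.prems that by (auto simp: saturated_def)
    then obtain t where "saturated t" "canonical_acc G s t" "f \<in> neg t"
      using canonical_successor D.prems by blast
    then show ?thesis using D.IH by auto
  qed
  ultimately show ?case by blast
next
  case Bot
  then show ?case using saturated_pos_closed by fastforce
next
  case (Conj f g)
  then show ?case
    using Conj.IH[OF Conj.prems] saturated_pos_closed[OF Conj.prems, of "Conj f g"]
      saturated_neg_closed[OF Conj.prems, of "Conj f g"] by auto
next
  case (Disj f g)
  then show ?case
    using Disj.IH[OF Disj.prems] saturated_pos_closed[OF Disj.prems, of "Disj f g"]
      saturated_neg_closed[OF Disj.prems, of "Disj f g"] by auto
next
  case (Imp f g)
  then show ?case
    using Imp.IH[OF Imp.prems] saturated_pos_closed[OF Imp.prems, of "Imp f g"]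
      saturated_neg_closed[OF Imp.prems, of "Imp f g"] by auto
next
  case (Neg f)
  then show ?case
    using Neg.IH[OF Neg.prems] saturated_pos_closed[OF Neg.prems, of "Neg f"]
      saturated_neg_closed[OF Neg.prems, of "Neg f"] by auto
qed

theorem canonical_countermodel:
  assumes "\<not> derivable \<Gamma> \<Delta>"
  shows "\<exists>s\<in>worlds canonical. (\<forall>f\<in>#\<Gamma>. sat canonical s f) \<and> (\<forall>f\<in>#\<Delta>. \<not> sat canonical s f)"
proof -
  obtain s where s: "saturated s" "set_mset \<Gamma> \<subseteq> pos s" "set_mset \<Delta> \<subseteq> neg s"
    using not_derivable_has_saturation[of \<Gamma> "{#}" \<Delta> "{#}"] assms unfolding has_saturation_def by auto
  then show ?thesis
    using canonical_truth[OF s(1)] by (intro bexI[of _ s]) auto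
qed

section \<open>Characteristic formulas\<close>

definition list_of :: "'b set \<Rightarrow> 'b list" where
  "list_of S = (SOME xs. set xs = S)"

lemma set_list_of [simp]: "finite S \<Longrightarrow> set (list_of S) = S"
  unfolding list_of_def by (rule someI_ex) (rule finite_list)

fun Conjs :: "('a, 'p) fm list \<Rightarrow> ('a, 'p) fm" where
  "Conjs [] = Neg Bot"
| "Conjs (f # fs) = Conj f (Conjs fs)"

fun Disjs :: "('a, 'p) fm list \<Rightarrow> ('a, 'p) fm" where
  "Disjs [] = Bot"
| "Disjs (f # fs) = Disj f (Disjs fs)"

lemma sat_Conjs [simp]: "sat M w (Conjs fs) \<longleftrightarrow> (\<forall>f\<in>set fs. sat M w f)"
  by (induction fs) auto

lemma sat_Disjs [simp]: "sat M w (Disjs fs) \<longleftrightarrow> (\<exists>f\<in>set fs. sat M w f)"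
  by (induction fs) auto

lemma wff_Conjs [simp]: "wff (Conjs fs) \<longleftrightarrow> (\<forall>f\<in>set fs. wff f)"
  by (induction fs) auto

lemma wff_Disjs [simp]: "wff (Disjs fs) \<longleftrightarrow> (\<forall>f\<in>set fs. wff f)"
  by (induction fs) auto

lemma vars_Conjs [simp]: "vars (Conjs fs) = (\<Union>f\<in>set fs. vars f)"
  by (induction fs) auto

lemma vars_Disjs [simp]: "vars (Disjs fs) = (\<Union>f\<in>set fs. vars f)"
  by (induction fs) auto

lemma agts_Conjs [simp]: "agts (Conjs fs) = (\<Union>f\<in>set fs. agts f)"
  by (induction fs) auto

lemma agts_Disjs [simp]: "agts (Disjs fs) = (\<Union>f\<in>set fs. agts f)"
  by (induction fs) auto

lemma derivable_Disjs_left: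
  "\<forall>f\<in>set fs. derivable (add_mset f \<Gamma>) \<Delta> \<Longrightarrow> derivable (add_mset (Disjs fs) \<Gamma>) \<Delta>"
  by (induction fs) (auto intro: derivable.BotL derivable.DisjL)

definition Dia :: "'a set \<Rightarrow> ('a, 'p) fm \<Rightarrow> ('a, 'p) fm" where
  "Dia G f = Neg (D G (Neg f))"

lemma sat_Dia [simp]: "sat M w (Dia G f) \<longleftrightarrow> (\<exists>v\<in>worlds M. acc M G w v \<and> sat M v f)"
  by (simp add: Dia_def)

definition literals :: "'p set \<Rightarrow> 'p set \<Rightarrow> ('a, 'p) fm" where
  "literals L S = Conjs (map (\<lambda>q. if q \<in> S then Var q else Neg (Var q)) (list_of L))"

lemma literals_props:
  assumes "finite L"
  shows "wff (literals L S)" and "vars (literals L S) \<subseteq> L" and "agts (literals L S) = {}"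
  using assms by (auto simp: literals_def)

lemma sat_literals:
  assumes "finite L"
  shows "sat M w (literals L S) \<longleftrightarrow> (\<forall>q\<in>L. val M w q \<longleftrightarrow> q \<in> S)"
proof -
  have "sat M w (literals L S) \<longleftrightarrow> (\<forall>q\<in>L. sat M w (if q \<in> S then Var q else Neg (Var q)))"
    unfolding literals_def sat_Conjs set_map set_list_of[OF assms] by blast
  also have "\<dots> \<longleftrightarrow> (\<forall>q\<in>L. val M w q \<longleftrightarrow> q \<in> S)"
    by (intro ball_cong) auto
  finally show ?thesis .
qed

definition char_fm :: "'p set \<Rightarrow> 'a set set \<Rightarrow> 'p set \<Rightarrow> ('a set \<times> ('a, 'p) fm) set \<Rightarrow> ('a, 'p) fm" where
  "char_fm L C S T = Conj (literals L S)
     (Conjs (map (\<lambda>H. Conj (Conjs (map (Dia H) (list_of (T `` {H})))) (D H (Disjs (list_of (T `` {H})))))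
       (list_of C)))"

lemma sat_char_fm:
  assumes "finite L" and "finite C" and "\<forall>H\<in>C. finite (T `` {H})"
  shows "sat M w (char_fm L C S T) \<longleftrightarrow> (\<forall>q\<in>L. val M w q \<longleftrightarrow> q \<in> S) \<and> (\<forall>H\<in>C.
     (\<forall>\<chi>\<in>T `` {H}. \<exists>v\<in>worlds M. acc M H w v \<and> sat M v \<chi>) \<and>
     (\<forall>v\<in>worlds M. acc M H w v \<longrightarrow> (\<exists>\<chi>\<in>T `` {H}. sat M v \<chi>)))"
  using assms by (simp add: char_fm_def sat_literals)

fun char_fms :: "'p set \<Rightarrow> 'a set set \<Rightarrow> nat \<Rightarrow> ('a, 'p) fm set" where
  "char_fms L C 0 = literals L ` Pow L"
| "char_fms L C (Suc k) = (\<lambda>(S, T). char_fm L C S T) ` (Pow L \<times> Pow (C \<times> char_fms L C k))"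

lemma finite_char_fms: "finite L \<Longrightarrow> finite C \<Longrightarrow> finite (char_fms L C k)"
  by (induction k) auto

lemma char_fms_props:
  assumes "finite L" and "finite C" and "{} \<notin> C" and "\<chi> \<in> char_fms L C k"
  shows "wff \<chi> \<and> vars \<chi> \<subseteq> L \<and> agts \<chi> \<subseteq> \<Union>C"
  using assms(4)
proof (induction k arbitrary: \<chi>)
  case 0
  then obtain S where "\<chi> = literals L S" by auto
  then show ?case by (simp add: literals_props[OF assms(1)])
next
  case (Suc k)
  then obtain S T where \<chi>: "\<chi> = char_fm L C S T" and "T \<subseteq> C \<times> char_fms L C k"
    by auto
  then have T: "\<psi> \<in> char_fms L C k" if "\<psi> \<in> T `` {H}" for H \<psi>
    using that by blast
  have fin: "finite (T `` {H})" for H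
    by (rule finite_subset[OF _ finite_char_fms[OF assms(1,2)]]) (use T in blast)
  have IH: "wff \<psi>" "vars \<psi> \<subseteq> L" "agts \<psi> \<subseteq> \<Union>C" if "\<psi> \<in> T `` {H}" for H \<psi>
    using Suc.IH[OF T[OF that]] by simp_all
  have "H \<noteq> {}" if "H \<in> C" for H
    using that assms(3) by auto
  then have "wff \<chi>"
    unfolding \<chi> char_fm_def using literals_props(1)[OF assms(1)] IH(1) fin assms(2)
    by (simp add: Dia_def)
  moreover have "vars \<chi> \<subseteq> L"
    unfolding \<chi> char_fm_def using literals_props(2)[OF assms(1)] IH(2) fin assms(2)
    by (simp add: Dia_def UN_subset_iff)
  moreover have "agts \<chi> \<subseteq> \<Union>C"
    unfolding \<chi> char_fm_def using IH(3) fin assms(2)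
    by (simp add: Dia_def UN_subset_iff Sup_upper literals_props(3)[OF assms(1)])
  ultimately show ?case by blast
qed

fun char_of :: "'p set \<Rightarrow> 'a set set \<Rightarrow> ('w, 'a, 'p) kmodel \<Rightarrow> nat \<Rightarrow> 'w \<Rightarrow> ('a, 'p) fm" where
  "char_of L C M 0 w = literals L {q \<in> L. val M w q}"
| "char_of L C M (Suc k) w = char_fm L C {q \<in> L. val M w q}
     {(H, char_of L C M k v) | H v. H \<in> C \<and> v \<in> worlds M \<and> acc M H w v}"

lemma char_of_in_char_fms: "char_of L C M k w \<in> char_fms L C k"
proof (induction k arbitrary: w)
  case (Suc k)
  let ?T = "{(H, char_of L C M k v) | H v. H \<in> C \<and> v \<in> worlds M \<and> acc M H w v}"
  have "({q \<in> L. val M w q}, ?T) \<in> Pow L \<times> Pow (C \<times> char_fms L C k)"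
    using Suc.IH by blast
  then show ?case
    unfolding char_of.simps char_fms.simps by (rule rev_image_eqI) simp
qed simp

fun bisim :: "'p set \<Rightarrow> 'a set set \<Rightarrow> ('w, 'a, 'p) kmodel \<Rightarrow> ('v, 'a, 'p) kmodel \<Rightarrow> nat \<Rightarrow> 'w \<Rightarrow> 'v \<Rightarrow> bool"
  where
  "bisim L C M M' 0 w w' \<longleftrightarrow> (\<forall>q\<in>L. val M w q = val M' w' q)"
| "bisim L C M M' (Suc k) w w' \<longleftrightarrow> (\<forall>q\<in>L. val M w q = val M' w' q) \<and> (\<forall>H\<in>C.
     (\<forall>v\<in>worlds M. acc M H w v \<longrightarrow> (\<exists>v'\<in>worlds M'. acc M' H w' v' \<and> bisim L C M M' k v v')) \<and>
     (\<forall>v'\<in>worlds M'. acc M' H w' v' \<longrightarrow> (\<exists>v\<in>worlds M. acc M H w v \<and> bisim L C M M' k v v')))"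

lemma bisim_val: "bisim L C M M' k w w' \<Longrightarrow> q \<in> L \<Longrightarrow> val M w q = val M' w' q"
  by (cases k) auto

lemma bisim_refl: "bisim L C M M k w w"
  by (induction k arbitrary: w) auto

theorem sat_char_of:
  assumes "finite L" and "finite C"
  shows "sat M' w' (char_of L C M k w) \<longleftrightarrow> bisim L C M M' k w w'"
proof (induction k arbitrary: w w')
  case 0
  then show ?case using assms(1) by (auto simp: sat_literals)
next
  case (Suc k)
  let ?T = "{(H, char_of L C M k v) | H v. H \<in> C \<and> v \<in> worlds M \<and> acc M H w v}"
  have T: "?T `` {H} = char_of L C M k ` {v \<in> worlds M. H \<in> C \<and> acc M H w v}" for H
    by auto
  have "finite (?T `` {H})" for H
    by (rule finite_subset[OF _ finite_char_fms[OF assms]]) (use char_of_in_char_fms in auto)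
  then have fin: "\<forall>H\<in>C. finite (?T `` {H})" by blast
  show ?case
    unfolding char_of.simps(2) sat_char_fm[OF assms fin] by (auto simp: T Suc.IH) blast+
qed

section \<open>Amalgamation of bisimilar models\<close>

fun depth :: "('a, 'p) fm \<Rightarrow> nat" where
  "depth (Var q) = 0"
| "depth Bot = 0"
| "depth (Conj f g) = max (depth f) (depth g)"
| "depth (Disj f g) = max (depth f) (depth g)"
| "depth (Imp f g) = max (depth f) (depth g)"
| "depth (Neg f) = depth f"
| "depth (D G f) = Suc (depth f)"

definition groups :: "'a set \<Rightarrow> 'a set set" where
  "groups A = {H. H \<noteq> {} \<and> H \<subseteq> A}"

(* A world pairs a world u of M with a world u' of N that is k-bisimilar to u, k being the
   modal depth still to be respected; either component may be missing. Along a group G the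
   M-part moves along G - {a}, which is invisible to formulas without a, and the N-part along
   the part of G in A, descending one level of depth; variables in V are read off from N. *)
locale amalgamation =
  fixes M :: "('w, 'a, 'p) kmodel" and N :: "('v, 'a, 'p) kmodel"
    and V :: "'p set" and A :: "'a set" and p :: 'p and a :: 'a
  assumes dk_M: "dk_model M" and dk_N: "dk_model N"
begin

abbreviation bis :: "nat \<Rightarrow> 'w \<Rightarrow> 'v \<Rightarrow> bool" where
  "bis \<equiv> bisim (V - {p}) (groups (A - {a})) M N"

definition amalgam_worlds :: "('w option \<times> ('v \<times> nat) option) set" where
  "amalgam_worlds = {(Some u, Some (u', k)) | u u' k. u \<in> worlds M \<and> u' \<in> worlds N \<and> bis k u u'}
     \<union> {(Some u, None) | u. u \<in> worlds M} \<union> {(None, Some (u', k)) | u' k. u' \<in> worlds N}"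

definition acc_left :: "'a set \<Rightarrow> 'w option \<Rightarrow> 'w option \<Rightarrow> bool" where
  "acc_left G x y = (case (x, y) of
      (Some u, Some v) \<Rightarrow> acc M (G - {a}) u v
    | (Some u, None) \<Rightarrow> G \<subseteq> {a}
    | (None, _) \<Rightarrow> True)"

definition acc_right :: "'a set \<Rightarrow> ('v \<times> nat) option \<Rightarrow> ('v \<times> nat) option \<Rightarrow> bool" where
  "acc_right G x y = (case x of
      Some (u', Suc m) \<Rightarrow> G \<inter> A = {} \<or> y = x \<or> (\<exists>v'. y = Some (v', m) \<and> acc N (G \<inter> A) u' v')
    | _ \<Rightarrow> True)"

fun amalgam_val :: "'w option \<times> ('v \<times> nat) option \<Rightarrow> 'p \<Rightarrow> bool" where
  "amalgam_val (Some u, None) q = val M u q"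
| "amalgam_val (None, Some (u', k)) q = (q \<in> V \<and> val N u' q)"
| "amalgam_val (Some u, Some (u', k)) q = (if q \<in> V then val N u' q else val M u q)"
| "amalgam_val (None, None) q = False"

definition amalgam :: "('w option \<times> ('v \<times> nat) option, 'a, 'p) kmodel" where
  "amalgam = \<lparr>worlds = amalgam_worlds,
     acc = (\<lambda>G x y. acc_left G (fst x) (fst y) \<and> acc_right G (snd x) (snd y)), val = amalgam_val\<rparr>"

lemma amalgam_simps [simp]:
  "worlds amalgam = amalgam_worlds"
  "acc amalgam G x y \<longleftrightarrow> acc_left G (fst x) (fst y) \<and> acc_right G (snd x) (snd y)"
  "val amalgam = amalgam_val"
  by (simp_all add: amalgam_def)

lemma amalgam_worlds_fst: "x \<in> amalgam_worlds \<Longrightarrow> fst x = Some u \<Longrightarrow> u \<in> worlds M"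
  and amalgam_worlds_snd: "x \<in> amalgam_worlds \<Longrightarrow> snd x = Some (u', k) \<Longrightarrow> u' \<in> worlds N"
  by (auto simp: amalgam_worlds_def)

lemma dk_model_amalgam: "dk_model amalgam"
proof -
  have "acc_left G (fst x) (fst x)" if "x \<in> amalgam_worlds" for G x
    using that dk_model_refl[OF dk_M] amalgam_worlds_fst
    by (auto simp: acc_left_def split: option.splits)
  moreover have "acc_right G y y" for G y
    by (simp add: acc_right_def split: option.splits nat.splits)
  moreover have "acc_left G x y" if "G \<subseteq> H" "acc_left H x y" for G H x y
  proof -
    have "G - {a} \<subseteq> H - {a}" using that(1) by blast
    then show ?thesis
      using that dk_model_antimono[OF dk_M] by (auto simp: acc_left_def split: option.splits)
  qed
  moreover have "acc_right G x y" if "G \<subseteq> H" "acc_right H x y" for G H x y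
  proof -
    have "G \<inter> A \<subseteq> H \<inter> A" using that(1) by blast
    then have "acc N (H \<inter> A) w v \<Longrightarrow> acc N (G \<inter> A) w v" "H \<inter> A = {} \<Longrightarrow> G \<inter> A = {}" for w v
      using dk_model_antimono[OF dk_N] by blast+
    then show ?thesis
      using that(2) unfolding acc_right_def by (auto split: option.splits nat.splits; blast)
  qed
  ultimately show ?thesis
    unfolding dk_model_def by auto
qed

lemma amalgam_forth_left:
  assumes x: "x \<in> amalgam_worlds" "fst x = Some u" and "a \<notin> G"
    and v: "v \<in> worlds M" "acc M G u v"
  shows "\<exists>y\<in>amalgam_worlds. acc amalgam G x y \<and> fst y = Some v"
proof (cases "\<exists>u' m. snd x = Some (u', Suc m) \<and> G \<inter> A \<noteq> {}")
  case True
  then obtain u' m where x': "snd x = Some (u', Suc m)" and GA: "G \<inter> A \<noteq> {}"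
    by blast
  have "bis (Suc m) u u'"
    using x x' by (cases x) (auto simp: amalgam_worlds_def)
  moreover have "G \<inter> A \<in> groups (A - {a})"
    using GA \<open>a \<notin> G\<close> by (auto simp: groups_def)
  moreover have "acc M (G \<inter> A) u v"
    using dk_model_antimono[OF dk_M _ v(2)] by blast
  ultimately have "\<exists>v'\<in>worlds N. acc N (G \<inter> A) u' v' \<and> bis m v v'"
    using v(1) by (simp only: bisim.simps)
  then obtain v' where v': "v' \<in> worlds N" "acc N (G \<inter> A) u' v'" "bis m v v'"
    by blast
  have "(Some v, Some (v', m)) \<in> amalgam_worlds"
    using v v' by (simp add: amalgam_worlds_def)
  moreover have "acc amalgam G x (Some v, Some (v', m))"
    using x x' v v' \<open>a \<notin> G\<close> by (simp add: acc_left_def acc_right_def)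
  ultimately show ?thesis by (intro bexI[of _ "(Some v, Some (v', m))"]) auto
next
  case False
  have "(Some v, None) \<in> amalgam_worlds"
    using v by (simp add: amalgam_worlds_def)
  moreover have "acc amalgam G x (Some v, None)"
    using x v False \<open>a \<notin> G\<close>
    by (auto simp: acc_left_def acc_right_def split: option.splits nat.splits)
  ultimately show ?thesis by (intro bexI[of _ "(Some v, None)"]) auto
qed

lemma sat_amalgam_left:
  assumes "wff f" and "p \<notin> vars f" and "a \<notin> agts f" and "x \<in> amalgam_worlds" and "fst x = Some u"
  shows "sat amalgam x f \<longleftrightarrow> sat M u f"
  using assms
proof (induction f arbitrary: x u)
  case (Var q)
  then show ?case
    using bisim_val[of "V - {p}" "groups (A - {a})" M N _ u _ q]
    by (cases x) (auto simp: amalgam_worlds_def split: if_splits)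
next
  case (D G f)
  then have G: "G \<noteq> {}" "a \<notin> G" and f: "wff f" "p \<notin> vars f" "a \<notin> agts f"
    by auto
  show ?case
  proof
    assume "sat amalgam x (D G f)"
    then show "sat M u (D G f)"
      using amalgam_forth_left[OF D.prems(4,5) G(2)] D.IH[OF f] by fastforce
  next
    assume u: "sat M u (D G f)"
    show "sat amalgam x (D G f)"
    proof (unfold sat.simps, intro ballI impI)
      fix y assume y: "y \<in> worlds amalgam" "acc amalgam G x y"
      then obtain v where v: "fst y = Some v" "acc M G u v"
        using D.prems(5) G by (auto simp: acc_left_def split: option.splits)
      then have "sat M v f"
        using u amalgam_worlds_fst y(1) by auto
      then show "sat amalgam y f"
        using D.IH[OF f] y(1) v(1) by simp
    qed
  qed
qed auto

lemma amalgam_forth_right: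
  assumes x: "x \<in> amalgam_worlds" "snd x = Some (u', Suc m)" and "G \<subseteq> A"
    and v': "v' \<in> worlds N" "acc N G u' v'"
  shows "\<exists>y\<in>amalgam_worlds. acc amalgam G x y \<and> snd y = Some (v', m)"
proof (cases "\<exists>u. fst x = Some u \<and> \<not> G \<subseteq> {a}")
  case True
  then obtain u where x': "fst x = Some u" and Ga: "\<not> G \<subseteq> {a}"
    by blast
  have "bis (Suc m) u u'"
    using x x' by (cases x) (auto simp: amalgam_worlds_def)
  moreover have "G - {a} \<in> groups (A - {a})"
    using Ga \<open>G \<subseteq> A\<close> by (auto simp: groups_def)
  moreover have "acc N (G - {a}) u' v'"
    using dk_model_antimono[OF dk_N _ v'(2)] by blast
  ultimately have "\<exists>v\<in>worlds M. acc M (G - {a}) u v \<and> bis m v v'"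
    using v'(1) by (simp only: bisim.simps)
  then obtain v where v: "v \<in> worlds M" "acc M (G - {a}) u v" "bis m v v'"
    by blast
  have "(Some v, Some (v', m)) \<in> amalgam_worlds"
    using v v' by (simp add: amalgam_worlds_def)
  moreover have "acc amalgam G x (Some v, Some (v', m))"
    using x x' v v' \<open>G \<subseteq> A\<close> by (simp add: acc_left_def acc_right_def Int_absorb2)
  ultimately show ?thesis by (intro bexI[of _ "(Some v, Some (v', m))"]) auto
next
  case False
  have "(None, Some (v', m)) \<in> amalgam_worlds"
    using v' by (simp add: amalgam_worlds_def)
  moreover have "acc amalgam G x (None, Some (v', m))"
    using x v' False \<open>G \<subseteq> A\<close>
    by (auto simp: acc_left_def acc_right_def Int_absorb2 split: option.splits)
  ultimately show ?thesis by (intro bexI[of _ "(None, Some (v', m))"]) auto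
qed

lemma sat_amalgam_right:
  assumes "wff f" and "vars f \<subseteq> V" and "agts f \<subseteq> A" and "depth f \<le> k"
    and "x \<in> amalgam_worlds" and "snd x = Some (u', k)"
  shows "sat amalgam x f \<longleftrightarrow> sat N u' f"
  using assms
proof (induction f arbitrary: x u' k)
  case (Var q)
  then show ?case
    by (cases x) (auto simp: amalgam_worlds_def)
next
  case (D G f)
  then obtain m where k: "k = Suc m"
    by (cases k) auto
  have G: "G \<noteq> {}" "G \<subseteq> A" and f: "wff f" "vars f \<subseteq> V" "agts f \<subseteq> A" "depth f \<le> m"
    using D.prems k by auto
  show ?case
  proof
    assume "sat amalgam x (D G f)"
    then show "sat N u' (D G f)"
      using amalgam_forth_right[OF D.prems(5) _ G(2)] D.prems(6) D.IH[OF f] k by fastforce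
  next
    assume u': "sat N u' (D G f)"
    show "sat amalgam x (D G f)"
    proof (unfold sat.simps, intro ballI impI)
      fix y assume y: "y \<in> worlds amalgam" "acc amalgam G x y"
      then have "snd y = snd x \<or> (\<exists>v'. snd y = Some (v', m) \<and> acc N G u' v')"
        using D.prems(6) G k by (auto simp: acc_right_def Int_absorb2)
      then show "sat amalgam y f"
      proof
        assume "snd y = snd x"
        have "sat N u' f"
          using u' amalgam_worlds_snd[OF D.prems(5,6)] dk_model_refl[OF dk_N] by auto
        moreover have "snd y = Some (u', Suc m)"
          using \<open>snd y = snd x\<close> D.prems(6) k by simp
        ultimately show ?thesis
          using D.IH[OF f(1-3) le_SucI[OF f(4)], of y] y(1) by simp
      next
        assume "\<exists>v'. snd y = Some (v', m) \<and> acc N G u' v'"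
        then obtain v' where v': "snd y = Some (v', m)" "acc N G u' v'"
          by blast
        then have "sat N v' f"
          using u' amalgam_worlds_snd y(1) by auto
        then show ?thesis
          using D.IH[OF f] y(1) v'(1) by simp
      qed
    qed
  qed
qed auto

end

theorem bisimilar_countermodels_not_derivable:
  fixes M :: "('w, 'a, 'p) kmodel" and N :: "('v, 'a, 'p) kmodel"
  assumes "dk_model M" and "dk_model N" and "u \<in> worlds M" and "u' \<in> worlds N"
    and "bisim (V - {p}) (groups (A - {a})) M N k u u'"
    and "\<forall>f\<in>#\<Pi> + \<Lambda>. wff f \<and> p \<notin> vars f \<and> a \<notin> agts f"
    and "\<forall>f\<in>#\<Gamma> + \<Delta>. wff f \<and> vars f \<subseteq> V \<and> agts f \<subseteq> A \<and> depth f \<le> k"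
    and "\<forall>f\<in>#\<Pi>. sat M u f" and "\<forall>f\<in>#\<Lambda>. \<not> sat M u f"
    and "\<forall>f\<in>#\<Gamma>. sat N u' f" and "\<forall>f\<in>#\<Delta>. \<not> sat N u' f"
  shows "\<not> derivable (\<Pi> + \<Gamma>) (\<Delta> + \<Lambda>)"
proof
  interpret amalgamation M N V A p a
    using assms(1,2) by unfold_locales
  let ?x = "(Some u, Some (u', k))"
  have x: "?x \<in> amalgam_worlds"
    using assms(3-5) by (simp add: amalgam_worlds_def)
  have left: "sat amalgam ?x f \<longleftrightarrow> sat M u f" if "f \<in># \<Pi> + \<Lambda>" for f
    using sat_amalgam_left[OF _ _ _ x] assms(6) that by simp
  have right: "sat amalgam ?x f \<longleftrightarrow> sat N u' f" if "f \<in># \<Gamma> + \<Delta>" for f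
    using sat_amalgam_right[OF _ _ _ _ x] assms(7) that by simp
  assume "derivable (\<Pi> + \<Gamma>) (\<Delta> + \<Lambda>)"
  moreover have "\<forall>f\<in>#\<Pi> + \<Gamma>. sat amalgam ?x f"
    using left right assms(8,10) by auto
  ultimately obtain f where "f \<in># \<Delta> + \<Lambda>" "sat amalgam ?x f"
    using soundness[OF _ dk_model_amalgam] x by fastforce
  then show False
    using left right assms(9,11) by auto
qed

section \<open>The interpolant\<close>

lemma finite_vars: "finite (vars f)"
  by (induction f) auto

lemma finite_mvars: "finite (mvars M)"
  by (simp add: mvars_def finite_vars)

lemma depth_le_sum_mset: "f \<in># M \<Longrightarrow> depth f \<le> (\<Sum>g\<in>#M. depth g)"
  by (induction M) auto

definition interpolant_candidates :: "('a, 'p) fm multiset \<Rightarrow> ('a, 'p) fm multiset \<Rightarrow> 'p \<Rightarrow> 'a \<Rightarrow>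
    ('a, 'p) fm set" where
  "interpolant_candidates \<Gamma> \<Delta> p a = {\<chi> \<in> char_fms (mvars (\<Gamma> + \<Delta>) - {p}) (groups (magts (\<Gamma> + \<Delta>) - {a}))
     (\<Sum>f\<in>#\<Gamma> + \<Delta>. depth f). derivable (add_mset \<chi> \<Gamma>) \<Delta>}"

definition interpolant :: "('a, 'p) fm multiset \<Rightarrow> ('a, 'p) fm multiset \<Rightarrow> 'p \<Rightarrow> 'a \<Rightarrow> ('a, 'p) fm" where
  "interpolant \<Gamma> \<Delta> p a = Disjs (list_of (interpolant_candidates \<Gamma> \<Delta> p a))"

lemma finite_interpolant_candidates:
  "finite (interpolant_candidates (\<Gamma> :: ('a :: finite, 'p) fm multiset) \<Delta> p a)"
proof -
  have "finite (char_fms (mvars (\<Gamma> + \<Delta>) - {p}) (groups (magts (\<Gamma> + \<Delta>) - {a})) k)" for k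
    by (rule finite_char_fms) (simp_all add: finite_mvars)
  then show ?thesis
    unfolding interpolant_candidates_def by (rule finite_subset[rotated]) auto
qed

lemma set_list_of_interpolant_candidates:
  "set (list_of (interpolant_candidates (\<Gamma> :: ('a :: finite, 'p) fm multiset) \<Delta> p a))
    = interpolant_candidates \<Gamma> \<Delta> p a"
  by (rule set_list_of[OF finite_interpolant_candidates])

lemma interpolant_language:
  fixes \<Gamma> \<Delta> :: "('a :: finite, 'p) fm multiset"
  shows "wff (interpolant \<Gamma> \<Delta> p a) \<and> vars (interpolant \<Gamma> \<Delta> p a) \<subseteq> mvars (\<Gamma> + \<Delta>) - {p}
    \<and> agts (interpolant \<Gamma> \<Delta> p a) \<subseteq> magts (\<Gamma> + \<Delta>) - {a}"
proof -
  define C where "C = groups (magts (\<Gamma> + \<Delta>) - {a})"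
  have C: "\<Union>C \<subseteq> magts (\<Gamma> + \<Delta>) - {a}" "{} \<notin> C"
    by (auto simp: C_def groups_def)
  have fin: "finite (mvars (\<Gamma> + \<Delta>) - {p})" "finite C"
    using finite_mvars by simp_all
  have "wff \<chi> \<and> vars \<chi> \<subseteq> mvars (\<Gamma> + \<Delta>) - {p} \<and> agts \<chi> \<subseteq> magts (\<Gamma> + \<Delta>) - {a}"
    if "\<chi> \<in> interpolant_candidates \<Gamma> \<Delta> p a" for \<chi>
    using that char_fms_props[OF fin C(2)] C(1)
    unfolding interpolant_candidates_def C_def[symmetric] by blast
  then show ?thesis
    unfolding interpolant_def by (auto simp: set_list_of_interpolant_candidates)
qed

lemma derivable_interpolant:
  "derivable (add_mset (interpolant (\<Gamma> :: ('a :: finite, 'p) fm multiset) \<Delta> p a) \<Gamma>) \<Delta>"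
  unfolding interpolant_def
  by (rule derivable_Disjs_left)
    (unfold set_list_of_interpolant_candidates, simp add: interpolant_candidates_def)

lemma char_of_countermodel_interpolant_candidate:
  fixes \<Gamma> \<Delta> \<Pi> \<Lambda> :: "('a :: finite, 'p) fm multiset"
  assumes "\<forall>f\<in>#\<Gamma> + \<Delta>. wff f" and "\<forall>f\<in>#\<Pi> + \<Lambda>. wff f"
    and "p \<notin> mvars (\<Pi> + \<Lambda>)" and "a \<notin> magts (\<Pi> + \<Lambda>)" and "derivable (\<Pi> + \<Gamma>) (\<Delta> + \<Lambda>)"
    and s: "s \<in> worlds canonical" "\<forall>f\<in>#\<Pi>. sat canonical s f" "\<forall>f\<in>#\<Lambda>. \<not> sat canonical s f"
  shows "char_of (mvars (\<Gamma> + \<Delta>) - {p}) (groups (magts (\<Gamma> + \<Delta>) - {a})) canonical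
    (\<Sum>f\<in>#\<Gamma> + \<Delta>. depth f) s \<in> interpolant_candidates \<Gamma> \<Delta> p a"
    (is "?\<chi> \<in> _")
proof -
  have fin: "finite (mvars (\<Gamma> + \<Delta>) - {p})" "finite (groups (magts (\<Gamma> + \<Delta>) - {a}))"
    using finite_mvars by simp_all
  have "derivable (add_mset ?\<chi> \<Gamma>) \<Delta>"
  proof (rule ccontr)
    assume "\<not> derivable (add_mset ?\<chi> \<Gamma>) \<Delta>"
    then obtain t where t: "t \<in> worlds canonical" "sat canonical t ?\<chi>"
      "\<forall>f\<in>#\<Gamma>. sat canonical t f" "\<forall>f\<in>#\<Delta>. \<not> sat canonical t f"
      by (auto dest: canonical_countermodel)
    then have "bisim (mvars (\<Gamma> + \<Delta>) - {p}) (groups (magts (\<Gamma> + \<Delta>) - {a})) canonical canonical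
        (\<Sum>f\<in>#\<Gamma> + \<Delta>. depth f) s t"
      by (simp add: sat_char_of[OF fin])
    then have "\<not> derivable (\<Pi> + \<Gamma>) (\<Delta> + \<Lambda>)"
    proof (rule bisimilar_countermodels_not_derivable[OF dk_model_canonical dk_model_canonical s(1) t(1)])
      show "\<forall>f\<in>#\<Pi> + \<Lambda>. wff f \<and> p \<notin> vars f \<and> a \<notin> agts f"
        using assms(2-4) by (auto simp: mvars_def magts_def)
      show "\<forall>f\<in>#\<Gamma> + \<Delta>. wff f \<and> vars f \<subseteq> mvars (\<Gamma> + \<Delta>) \<and> agts f \<subseteq> magts (\<Gamma> + \<Delta>)
          \<and> depth f \<le> (\<Sum>f\<in>#\<Gamma> + \<Delta>. depth f)"
        using assms(1) depth_le_sum_mset unfolding mvars_def magts_def by blast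
    qed (use s t in auto)
    with assms(5) show False by blast
  qed
  then show ?thesis
    unfolding interpolant_candidates_def by (simp add: char_of_in_char_fms)
qed

lemma interpolant_uniform:
  fixes \<Gamma> \<Delta> \<Pi> \<Lambda> :: "('a :: finite, 'p) fm multiset"
  assumes "\<forall>f\<in>#\<Gamma> + \<Delta>. wff f" and "\<forall>f\<in>#\<Pi> + \<Lambda>. wff f"
    and "p \<notin> mvars (\<Pi> + \<Lambda>)" and "a \<notin> magts (\<Pi> + \<Lambda>)" and "derivable (\<Pi> + \<Gamma>) (\<Delta> + \<Lambda>)"
  shows "derivable \<Pi> (add_mset (interpolant \<Gamma> \<Delta> p a) \<Lambda>)"
proof (rule ccontr)
  assume "\<not> derivable \<Pi> (add_mset (interpolant \<Gamma> \<Delta> p a) \<Lambda>)"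
  then obtain s where s: "s \<in> worlds canonical" "\<forall>f\<in>#\<Pi>. sat canonical s f"
    "\<forall>f\<in>#\<Lambda>. \<not> sat canonical s f" and "\<not> sat canonical s (interpolant \<Gamma> \<Delta> p a)"
    by (auto dest: canonical_countermodel)
  moreover have "sat canonical s (char_of (mvars (\<Gamma> + \<Delta>) - {p}) (groups (magts (\<Gamma> + \<Delta>) - {a}))
      canonical (\<Sum>f\<in>#\<Gamma> + \<Delta>. depth f) s)"
    by (simp add: sat_char_of finite_mvars bisim_refl)
  ultimately show False
    using char_of_countermodel_interpolant_candidate[OF assms s]
    by (auto simp: interpolant_def set_list_of_interpolant_candidates)
qed

theorem corollary6p19:
  fixes \<Gamma> \<Delta> :: "('ag :: finite, 'p :: countable) fm multiset"
    and p :: 'p and a :: 'ag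
  assumes "\<forall>B \<in># \<Gamma> + \<Delta>. wff B"
  shows "\<exists>A. wff A
    \<and> vars A \<subseteq> mvars (\<Gamma> + \<Delta>) - {p}
    \<and> agts A \<subseteq> magts (\<Gamma> + \<Delta>) - {a}
    \<and> derivable (add_mset A \<Gamma>) \<Delta>
    \<and> (\<forall>\<Pi> \<Lambda>. (\<forall>B \<in># \<Pi> + \<Lambda>. wff B) \<longrightarrow>
          p \<notin> mvars (\<Pi> + \<Lambda>) \<longrightarrow> a \<notin> magts (\<Pi> + \<Lambda>) \<longrightarrow>
          derivable (\<Pi> + \<Gamma>) (\<Delta> + \<Lambda>) \<longrightarrow> derivable \<Pi> (add_mset A \<Lambda>))"
  using interpolant_language[of \<Gamma> \<Delta> p a] derivable_interpolant[of \<Gamma> \<Delta> p a]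
    interpolant_uniform[OF assms]
  by (intro exI[of _ "interpolant \<Gamma> \<Delta> p a"]) auto

end
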